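(* Let $I=(m_1,\dots,m_k,T_1,\dots,T_n)$ be an instance of the VSPA problem with $0<m_1\le m_2\le\dots\le m_k$, $n=\sum_r m_r$, $T_i\in\{H,L\}$ for all $i$ where $0\le H<L$, and $T_1=H$, and let $g$ be a nondecreasing function. Let $\gamma^*$ be the agent to which Algorithm 1, run on $(m_1,\dots,m_k,T_1,\dots,T_n)$, assigns task $1$ (i.e. $\gamma^*=\mathrm{TA}(m_1,\dots,m_k;T_1,\dots,T_n)$). Then for every valid decision sequence $\mathbf{x}=(x_1,\dots,x_n)$ with $x_1\ne\gamma^*$ there exists a valid decision sequence $\mathbf{x}^*=(\gamma^*,x^*_2,\dots,x^*_n)$ with $\mathrm{COST}_I(\mathbf{x}^* )\le\mathrm{COST}_I(\mathbf{x})$.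
   Context: Variable-Sized Positional Allocation (VSPA) problem: an instance consists of capacities $m_1,\dots,m_k$ (positive integers) and intrinsic task costs $T_1,\dots,T_n\ge 0$ with $n=\sum_r m_r$, together with a nondecreasing function $g:\mathbb{N}\to\mathbb{R}_{\ge0}$ (in the original problem $g(q)=f(m+1-q)$ for a nonincreasing positional function $f$). A decision sequence $\mathbf{x}\in[k]^n$ assigns task $t$ to agent $x_t$; it is valid if each agent $r$ receives exactly $m_r$ tasks. When task $t$ is assigned, agent $x_t$ has remaining capacity $q_t=m_{x_t}-|\{s<t: x_s=x_t\}|$, and the assignment costs $g(q_t)\cdot T_t$. The total cost is $\mathrm{COST}_I(\mathbf{x})=\sum_{t=1}^n g(q_t)\,T_t$. Subroutine $\mathrm{TA}(m_1,\dots,m_k;\,S_1,\dots,S_N)$ (ThresholdAllocation, used by Algorithm 1 for the first task), with the convention $m_0:=0$: for $\gamma=k,k-1,\dots,1$: if $m_\gamma=m_{\gamma-1}$, go to the next $\gamma$; otherwise, for $h=\gamma,\gamma+1,\dots,k$: let $Z_L=\sum_{i=1}^{h-1}\min\{m_i,m_{\gamma-1}\}$ and $Z_H=\sum_{i=\gamma}^{h}(m_i-m_{\gamma-1})$; if $|\{i\in\{1,\dots,Z_L+Z_H\}: S_i>S_1\}|\ge Z_L$, return $\gamma$. *)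

theory Defs
  imports Complex_Main
begin

text \<open>Agents are indexed 1..k (capacities m 1, ..., m k), tasks are indexed 1..n
  (intrinsic costs T 1, ..., T n). A decision sequence is a function x with x t the
  agent of task t (only its values on 1..n matter).\<close>

definition valid_seq :: "nat \<Rightarrow> (nat \<Rightarrow> nat) \<Rightarrow> nat \<Rightarrow> (nat \<Rightarrow> nat) \<Rightarrow> bool" where
  "valid_seq k m n x \<longleftrightarrow>
     (\<forall>t\<in>{1..n}. x t \<in> {1..k}) \<and>
     (\<forall>r\<in>{1..k}. card {t\<in>{1..n}. x t = r} = m r)"

definition rem_cap :: "(nat \<Rightarrow> nat) \<Rightarrow> (nat \<Rightarrow> nat) \<Rightarrow> nat \<Rightarrow> nat" where
  "rem_cap m x t = m (x t) - card {s\<in>{1..<t}. x s = x t}"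

definition COST :: "(nat \<Rightarrow> real) \<Rightarrow> (nat \<Rightarrow> nat) \<Rightarrow> nat \<Rightarrow> (nat \<Rightarrow> real) \<Rightarrow> (nat \<Rightarrow> nat) \<Rightarrow> real" where
  "COST g m n T x = (\<Sum>t=1..n. g (rem_cap m x t) * T t)"

definition m0 :: "(nat \<Rightarrow> nat) \<Rightarrow> nat \<Rightarrow> nat" where
  "m0 m i = (if i = 0 then 0 else m i)"

definition TA_accepts :: "nat \<Rightarrow> (nat \<Rightarrow> nat) \<Rightarrow> (nat \<Rightarrow> real) \<Rightarrow> nat \<Rightarrow> bool" where
  "TA_accepts k m S \<gamma> \<longleftrightarrow>
     m0 m \<gamma> \<noteq> m0 m (\<gamma> - 1) \<and>
     (\<exists>h\<in>{\<gamma>..k}.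
        let ZL = (\<Sum>i=1..h-1. min (m i) (m0 m (\<gamma> - 1)));
            ZH = (\<Sum>i=\<gamma>..h. m i - m0 m (\<gamma> - 1))
        in card {i\<in>{1..ZL+ZH}. S i > S 1} \<ge> ZL)"

text \<open>TA scans gamma = k, k-1, ..., 1 and returns the first accepted gamma,
  i.e. the greatest accepted gamma in 1..k.\<close>
definition TA :: "nat \<Rightarrow> (nat \<Rightarrow> nat) \<Rightarrow> (nat \<Rightarrow> real) \<Rightarrow> nat" where
  "TA k m S = (GREATEST \<gamma>. \<gamma> \<in> {1..k} \<and> TA_accepts k m S \<gamma>)"

end

theory Submission
  imports Defs
begin

text \<open>Mark the tasks of cost L. Telescoping g, the cost of a valid sequence is a constant plus
  L - H times the sum over c \<ge> 1 of (g c - g (c - 1)) times the number of marked tasks served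
  at remaining capacity \<ge> c. As g is nondecreasing, it suffices to find a sequence starting
  with TA that minimises these counts for all thresholds c simultaneously.

  For a fixed threshold the minimum is an explicit potential min_high, a lower bound for
  every valid sequence. The greedy sequence (a marked task to an agent of least positive
  capacity, an unmarked task to the ThresholdAllocation choice among the positive agents)
  never raises the potential, so it attains the bound at every threshold at once. The heart
  of the argument is that serving an unmarked task by the agent chosen by ThresholdAllocation
  does not raise the potential: agents of larger index fail the test, and acceptance of the
  chosen agent yields a prefix with too many marked tasks whenever a smaller agent would be
  the better choice.\<close>

definition marked_upto :: "(nat \<Rightarrow> bool) \<Rightarrow> nat \<Rightarrow> nat" where
  "marked_upto w t = card {i\<in>{1..t}. w i}"

definition unmarked_upto :: "(nat \<Rightarrow> bool) \<Rightarrow> nat \<Rightarrow> nat" where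
  "unmarked_upto w t = card {i\<in>{1..t}. \<not> w i}"

lemma card_filter_1_Suc:
  "card {i\<in>{1..Suc t}. P i} = (if P 1 then 1 else 0) + card {i\<in>{1..t}. P (Suc i)}"
proof -
  have split: "{i\<in>{1..Suc t}. P i} = (if P 1 then {1} else {}) \<union> Suc ` {i\<in>{1..t}. P (Suc i)}"
  proof (intro set_eqI iffI)
    fix i assume "i \<in> {i\<in>{1..Suc t}. P i}"
    then show "i \<in> (if P 1 then {1} else {}) \<union> Suc ` {i\<in>{1..t}. P (Suc i)}"
      by (cases i) (auto simp: image_iff, metis One_nat_def Suc_leI neq0_conv)
  qed (auto split: if_splits)
  have "card ((if P 1 then {1} else {}) \<union> Suc ` {i\<in>{1..t}. P (Suc i)}) =
        card (if P 1 then {1::nat} else {}) + card (Suc ` {i\<in>{1..t}. P (Suc i)})"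
    by (rule card_Un_disjoint) auto
  then show ?thesis
    using split by (simp add: card_image)
qed

lemma unmarked_plus_marked: "unmarked_upto w t + marked_upto w t = t"
proof -
  have split: "{1..t} = {i\<in>{1..t}. \<not> w i} \<union> {i\<in>{1..t}. w i}" by auto
  have "card {1..t} = card {i\<in>{1..t}. \<not> w i} + card {i\<in>{1..t}. w i}"
    by (subst split, rule card_Un_disjoint) auto
  then show ?thesis by (simp add: unmarked_upto_def marked_upto_def)
qed

lemma marked_upto_mono: "t \<le> t' \<Longrightarrow> marked_upto w t \<le> marked_upto w t'"
  unfolding marked_upto_def by (rule card_mono) auto

lemma unmarked_upto_mono: "t \<le> t' \<Longrightarrow> unmarked_upto w t \<le> unmarked_upto w t'"
  unfolding unmarked_upto_def by (rule card_mono) auto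

lemma marked_upto_le: "marked_upto w t \<le> t"
  using unmarked_plus_marked[of w t] by simp

lemma marked_upto_Suc: "marked_upto w (Suc t) = (if w 1 then 1 else 0) + marked_upto (\<lambda>i. w (Suc i)) t"
  unfolding marked_upto_def by (rule card_filter_1_Suc)

lemma unmarked_upto_Suc:
  "unmarked_upto w (Suc t) = (if w 1 then 0 else 1) + unmarked_upto (\<lambda>i. w (Suc i)) t"
  unfolding unmarked_upto_def using card_filter_1_Suc[of t "\<lambda>i. \<not> w i"] by simp

section \<open>The threshold potential\<close>

text \<open>Fix a threshold c \<ge> 1 and remaining capacities s of the agents A. A task served at
  remaining capacity below c needs an agent that is already below c: either one of the
  agents of capacity < c (low_sum slots in total) or an agent i of capacity \<ge> c that has
  been drained by s i - (c - 1) earlier tasks, which then offers c - 1 slots. Hence after x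
  tasks served at capacity \<ge> c, at most low_slots A s c x tasks can have been served
  below c. If the first t tasks contain marked_upto w t marked tasks, at least
  min_high A s c w of them are therefore served at capacity \<ge> c; this bound is attained.\<close>

definition low_sum :: "nat set \<Rightarrow> (nat \<Rightarrow> nat) \<Rightarrow> nat \<Rightarrow> nat" where
  "low_sum A s c = (\<Sum>i\<in>{i\<in>A. s i < c}. s i)"

definition high_agents :: "nat set \<Rightarrow> (nat \<Rightarrow> nat) \<Rightarrow> nat \<Rightarrow> nat set" where
  "high_agents A s c = {i\<in>A. c \<le> s i}"

definition excess :: "(nat \<Rightarrow> nat) \<Rightarrow> nat \<Rightarrow> nat set \<Rightarrow> nat" where
  "excess s c B = (\<Sum>i\<in>B. s i - (c - 1))"

definition drain_sets :: "nat set \<Rightarrow> (nat \<Rightarrow> nat) \<Rightarrow> nat \<Rightarrow> nat \<Rightarrow> nat set set" where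
  "drain_sets A s c x = {B. B \<subseteq> high_agents A s c \<and> excess s c B \<le> x}"

definition drainable :: "nat set \<Rightarrow> (nat \<Rightarrow> nat) \<Rightarrow> nat \<Rightarrow> nat \<Rightarrow> nat" where
  "drainable A s c x = Max (card ` drain_sets A s c x)"

definition low_slots :: "nat set \<Rightarrow> (nat \<Rightarrow> nat) \<Rightarrow> nat \<Rightarrow> nat \<Rightarrow> nat" where
  "low_slots A s c x = low_sum A s c + (c - 1) * drainable A s c x"

definition overflows :: "nat set \<Rightarrow> (nat \<Rightarrow> nat) \<Rightarrow> nat \<Rightarrow> (nat \<Rightarrow> bool) \<Rightarrow> nat \<Rightarrow> nat \<Rightarrow> bool" where
  "overflows A s c w t v \<longleftrightarrow> v + low_slots A s c (unmarked_upto w t + v) < marked_upto w t"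

definition min_high :: "nat set \<Rightarrow> (nat \<Rightarrow> nat) \<Rightarrow> nat \<Rightarrow> (nat \<Rightarrow> bool) \<Rightarrow> nat" where
  "min_high A s c w = (LEAST v. \<forall>t \<le> sum s A. \<not> overflows A s c w t v)"

lemma finite_high_agents: "finite A \<Longrightarrow> finite (high_agents A s c)"
  unfolding high_agents_def by simp

lemma finite_drain_sets: "finite A \<Longrightarrow> finite (drain_sets A s c x)"
  by (rule finite_subset[of _ "Pow (high_agents A s c)"]) (auto simp: drain_sets_def finite_high_agents)

lemma drainable_ge:
  "finite A \<Longrightarrow> B \<subseteq> high_agents A s c \<Longrightarrow> excess s c B \<le> x \<Longrightarrow> card B \<le> drainable A s c x"
  unfolding drainable_def using finite_drain_sets[of A s c x]
  by (intro Max_ge) (auto simp: drain_sets_def)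

lemma drainable_witness:
  assumes "finite A"
  obtains B where "B \<subseteq> high_agents A s c" "excess s c B \<le> x" "card B = drainable A s c x"
proof -
  have "{} \<in> drain_sets A s c x"
    by (simp add: drain_sets_def excess_def)
  then have "drainable A s c x \<in> card ` drain_sets A s c x"
    unfolding drainable_def using finite_drain_sets[OF assms] by (intro Max_in) auto
  then show ?thesis
    using that unfolding drain_sets_def by auto
qed

lemma drainable_mono: "finite A \<Longrightarrow> x \<le> y \<Longrightarrow> drainable A s c x \<le> drainable A s c y"
proof -
  assume "finite A" "x \<le> y"
  then obtain B where "B \<subseteq> high_agents A s c" "excess s c B \<le> x" "card B = drainable A s c x"
    using drainable_witness by blast
  with \<open>finite A\<close> \<open>x \<le> y\<close> show ?thesis
    using drainable_ge[of A B s c y] by simp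
qed

lemma drainable_le_card_high_agents: "finite A \<Longrightarrow> drainable A s c x \<le> card (high_agents A s c)"
  by (rule drainable_witness[of A s c x]) (metis card_mono finite_high_agents)+

lemma low_slots_mono: "finite A \<Longrightarrow> x \<le> y \<Longrightarrow> low_slots A s c x \<le> low_slots A s c y"
  unfolding low_slots_def using drainable_mono by simp

lemma overflows_antimono:
  "finite A \<Longrightarrow> v \<le> v' \<Longrightarrow> overflows A s c w t v' \<Longrightarrow> overflows A s c w t v"
  unfolding overflows_def using low_slots_mono[of A "unmarked_upto w t + v" "unmarked_upto w t + v'" s c]
  by simp

lemma not_overflows_0: "\<not> overflows A s c w 0 v"
  unfolding overflows_def marked_upto_def by simp

lemma min_high_not_overflows: "t \<le> sum s A \<Longrightarrow> \<not> overflows A s c w t (min_high A s c w)"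
proof -
  have "\<forall>t \<le> sum s A. \<not> overflows A s c w t (sum s A)"
    using marked_upto_le unfolding overflows_def by (meson le_trans not_add_less1 not_le)
  then have "\<forall>t \<le> sum s A. \<not> overflows A s c w t (min_high A s c w)"
    unfolding min_high_def by (rule LeastI)
  then show "t \<le> sum s A \<Longrightarrow> ?thesis" by blast
qed

lemma min_high_le: "(\<And>t. t \<le> sum s A \<Longrightarrow> \<not> overflows A s c w t v) \<Longrightarrow> min_high A s c w \<le> v"
  unfolding min_high_def by (rule Least_le) blast

lemma less_min_high:
  "finite A \<Longrightarrow> t \<le> sum s A \<Longrightarrow> overflows A s c w t v \<Longrightarrow> v < min_high A s c w"
  by (meson min_high_not_overflows not_le_imp_less overflows_antimono)

lemma excess_fun_upd_notin: "r \<notin> B \<Longrightarrow> excess (s(r := v)) c B = excess s c B"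
  unfolding excess_def by (rule sum.cong) auto

lemma excess_remove: "finite B \<Longrightarrow> r \<in> B \<Longrightarrow> excess s c B = (s r - (c - 1)) + excess s c (B - {r})"
  unfolding excess_def by (simp add: sum.remove)

lemma excess_insert:
  "finite B \<Longrightarrow> r \<notin> B \<Longrightarrow> excess s c (insert r B) = (s r - (c - 1)) + excess s c B"
  unfolding excess_def by simp

lemma sum_fun_upd_decr:
  assumes "finite A" "r \<in> A" "0 < s r"
  shows "sum s A = Suc (sum (s(r := s r - 1)) A)"
proof -
  have "sum s A = s r + sum s (A - {r})"
    using assms by (simp add: sum.remove)
  moreover have "sum (s(r := s r - 1)) A = (s r - 1) + sum s (A - {r})"
    using assms by (simp add: sum.remove)
  ultimately show ?thesis using assms(3) by simp
qed

lemma low_sum_decr_low: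
  assumes "finite A" "r \<in> A" "0 < s r" "s r < c"
  shows "low_sum A s c = Suc (low_sum A (s(r := s r - 1)) c)"
    and "high_agents A (s(r := s r - 1)) c = high_agents A s c"
proof -
  have "{i\<in>A. (s(r := s r - 1)) i < c} = {i\<in>A. s i < c}"
    using assms by auto
  then show "low_sum A s c = Suc (low_sum A (s(r := s r - 1)) c)"
    unfolding low_sum_def using assms by (simp add: sum_fun_upd_decr)
  show "high_agents A (s(r := s r - 1)) c = high_agents A s c"
    unfolding high_agents_def using assms by auto
qed

lemma low_sum_decr_high:
  assumes "r \<in> A" "c < s r"
  shows "low_sum A (s(r := s r - 1)) c = low_sum A s c"
    and "high_agents A (s(r := s r - 1)) c = high_agents A s c"
proof -
  have "{i\<in>A. (s(r := s r - 1)) i < c} = {i\<in>A. s i < c}"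
    using assms by auto
  then show "low_sum A (s(r := s r - 1)) c = low_sum A s c"
    unfolding low_sum_def using assms by (auto intro!: sum.cong)
  show "high_agents A (s(r := s r - 1)) c = high_agents A s c"
    unfolding high_agents_def using assms by auto
qed

lemma low_sum_decr_at_threshold:
  assumes "finite A" "r \<in> A" "s r = c" "1 \<le> c"
  shows "low_sum A (s(r := s r - 1)) c = (c - 1) + low_sum A s c"
    and "high_agents A (s(r := s r - 1)) c = high_agents A s c - {r}"
proof -
  have "{i\<in>A. (s(r := s r - 1)) i < c} = insert r {i\<in>A. s i < c}"
    using assms by auto
  moreover have "(\<Sum>i\<in>{i\<in>A. s i < c}. (s(r := s r - 1)) i) = low_sum A s c"
    unfolding low_sum_def using assms by (auto intro: sum.cong)
  ultimately show "low_sum A (s(r := s r - 1)) c = (c - 1) + low_sum A s c"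
    unfolding low_sum_def using assms by simp
  show "high_agents A (s(r := s r - 1)) c = high_agents A s c - {r}"
    unfolding high_agents_def using assms by auto
qed

lemma excess_decr_mem:
  assumes "finite B" "r \<in> B" "c \<le> s r" "1 \<le> c"
  shows "Suc (excess (s(r := s r - 1)) c B) = excess s c B"
  using assms excess_remove[OF assms(1,2), of s c] excess_remove[OF assms(1,2), of "s(r := s r - 1)" c]
    excess_fun_upd_notin[of r "B - {r}" s "s r - 1" c] by simp

lemma excess_exchange:
  assumes "finite B" "a \<in> B" "r \<notin> B" "c \<le> s r" "s r \<le> s a" "1 \<le> c"
  shows "excess (s(r := s r - 1)) c (insert r (B - {a})) < excess s c B"
proof -
  have "excess (s(r := s r - 1)) c (insert r (B - {a})) = (s r - 1 - (c - 1)) + excess s c (B - {a})"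
    using assms by (simp add: excess_insert excess_fun_upd_notin)
  moreover have "excess s c B = (s a - (c - 1)) + excess s c (B - {a})"
    using assms by (simp add: excess_remove)
  ultimately show ?thesis using assms by simp
qed

lemma card_exchange: "finite B \<Longrightarrow> a \<in> B \<Longrightarrow> r \<notin> B \<Longrightarrow> card (insert r (B - {a})) = card B"
  by (simp add: card_Diff_singleton card.insert_remove) (metis card_Diff1_less card_Diff_singleton_if
      Suc_pred card_gt_0_iff empty_iff)

lemma drainable_decr_high:
  assumes "finite A" "r \<in> A" "c < s r" "1 \<le> c"
  shows "drainable A (s(r := s r - 1)) c x \<le> drainable A s c (Suc x)"
proof -
  let ?s = "s(r := s r - 1)"
  obtain B where B: "B \<subseteq> high_agents A ?s c" "excess ?s c B \<le> x" "card B = drainable A ?s c x"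
    using drainable_witness[OF assms(1)] by blast
  have "finite B"
    using B(1) finite_high_agents[OF assms(1)] finite_subset by blast
  then have "excess s c B \<le> Suc x"
    using assms B(2) excess_decr_mem[of B r c s] excess_fun_upd_notin[of r B s "s r - 1" c]
    by (cases "r \<in> B") auto
  moreover have "B \<subseteq> high_agents A s c"
    using B(1) low_sum_decr_high(2)[where A=A and r=r and s=s and c=c, OF assms(2,3)] by simp
  ultimately show ?thesis
    using drainable_ge[OF assms(1), of B s c "Suc x"] B(3) by simp
qed

lemma drainable_decr_at_threshold:
  assumes "finite A" "r \<in> A" "s r = c" "1 \<le> c"
  shows "Suc (drainable A (s(r := s r - 1)) c x) \<le> drainable A s c (Suc x)"
proof -
  let ?s = "s(r := s r - 1)"
  obtain B where B: "B \<subseteq> high_agents A ?s c" "excess ?s c B \<le> x" "card B = drainable A ?s c x"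
    using drainable_witness[OF assms(1)] by blast
  have high: "high_agents A ?s c = high_agents A s c - {r}"
    by (rule low_sum_decr_at_threshold(2)[where A=A and r=r and s=s and c=c, OF assms])
  have "finite B"
    using B(1) finite_high_agents[OF assms(1)] finite_subset by blast
  moreover have "r \<notin> B"
    using B(1) high by auto
  ultimately have "excess s c (insert r B) \<le> Suc x" "card (insert r B) = Suc (card B)"
    using assms B(2) excess_insert[of B r s c] excess_fun_upd_notin[of r B s "s r - 1" c] by auto
  moreover have "insert r B \<subseteq> high_agents A s c"
    using B(1) high assms by (auto simp: high_agents_def)
  ultimately show ?thesis
    using B(3) drainable_ge[OF assms(1), of "insert r B" s c "Suc x"] by simp
qed

lemma drainable_le_decr_at_threshold:
  assumes "finite A" "r \<in> A" "s r = c" "1 \<le> c"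
  shows "drainable A s c (Suc x) \<le> Suc (drainable A (s(r := s r - 1)) c x)"
proof -
  let ?s = "s(r := s r - 1)"
  obtain B where B: "B \<subseteq> high_agents A s c" "excess s c B \<le> Suc x" "card B = drainable A s c (Suc x)"
    using drainable_witness[OF assms(1)] by blast
  have fin: "finite B"
    using B(1) finite_high_agents[OF assms(1)] finite_subset by blast
  show ?thesis
  proof (cases "B = {}")
    case False
    text \<open>Drop r from B if possible, otherwise any element; each costs at least one task.\<close>
    obtain a where a: "a \<in> B" "r \<in> B \<longrightarrow> a = r"
      using False by blast
    have "c \<le> s a"
      using a B(1) by (auto simp: high_agents_def)
    then have "excess ?s c (B - {a}) \<le> x"
      using a assms B(2) excess_remove[OF fin a(1), of s c] excess_fun_upd_notin[of r "B - {a}" s "s r - 1" c]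
      by auto
    moreover have "B - {a} \<subseteq> high_agents A ?s c"
      using B(1) a low_sum_decr_at_threshold(2)[where A=A and r=r and s=s and c=c, OF assms] by auto
    ultimately have "card (B - {a}) \<le> drainable A ?s c x"
      by (rule drainable_ge[OF assms(1), rotated])
    then show ?thesis
      using B(3) a fin by (simp add: card_Diff_singleton)
  qed (use B in simp)
qed

text \<open>A drained set for s and budget x + 1 either contains r, or contains an agent at least
  as large as r, which can be swapped for r, or consists of agents below r.\<close>

lemma drainable_le_decr_high:
  assumes "finite A" "r \<in> A" "c < s r" "1 \<le> c"
    and small: "excess s c {i\<in>high_agents A s c. s i < s r} \<le> x"
  shows "drainable A s c (Suc x) \<le> drainable A (s(r := s r - 1)) c x"
proof -
  let ?s = "s(r := s r - 1)"
  have high: "high_agents A ?s c = high_agents A s c"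
    by (rule low_sum_decr_high(2)[where A=A and r=r and s=s and c=c, OF assms(2,3)])
  obtain B where B: "B \<subseteq> high_agents A s c" "excess s c B \<le> Suc x" "card B = drainable A s c (Suc x)"
    using drainable_witness[OF assms(1)] by blast
  have fin: "finite B"
    using B(1) finite_high_agents[OF assms(1)] finite_subset by blast
  consider "r \<in> B" | a where "r \<notin> B" "a \<in> B" "s r \<le> s a" | "B \<subseteq> {i\<in>high_agents A s c. s i < s r}"
    using B(1) by (cases "r \<in> B"; cases "\<exists>a\<in>B. s r \<le> s a") (auto simp: not_le)
  then show ?thesis
  proof cases
    case 1
    then have "excess ?s c B \<le> x"
      using excess_decr_mem[OF fin 1, of c s] assms B(2) by simp
    then show ?thesis
      using drainable_ge[OF assms(1), of B ?s c x] B(1,3) high by simp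
  next
    case (2 a)
    have "excess ?s c (insert r (B - {a})) \<le> x"
      using excess_exchange[OF fin 2(2,1), of c s] 2 assms B(2) by simp
    moreover have "insert r (B - {a}) \<subseteq> high_agents A ?s c"
      using B(1) high assms by (auto simp: high_agents_def)
    ultimately show ?thesis
      using drainable_ge[OF assms(1), of "insert r (B - {a})" ?s c x] card_exchange[OF fin 2(2,1)] B(3)
      by simp
  next
    case 3
    have "excess s c B \<le> excess s c {i\<in>high_agents A s c. s i < s r}"
      unfolding excess_def using 3 finite_high_agents[OF assms(1)] by (intro sum_mono2) auto
    moreover have "r \<notin> B"
      using 3 by auto
    ultimately have "excess ?s c B \<le> x"
      using small excess_fun_upd_notin[of r B s "s r - 1" c] by simp
    then show ?thesis
      using drainable_ge[OF assms(1), of B ?s c x] B(1,3) high by simp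
  qed
qed

lemma low_slots_decr_low:
  assumes "finite A" "r \<in> A" "0 < s r" "s r < c"
  shows "Suc (low_slots A (s(r := s r - 1)) c x) = low_slots A s c x"
proof -
  have "excess (s(r := s r - 1)) c B = excess s c B" if "B \<subseteq> high_agents A s c" for B
    using that assms by (intro excess_fun_upd_notin) (auto simp: high_agents_def)
  then have "drain_sets A (s(r := s r - 1)) c x = drain_sets A s c x"
    using low_sum_decr_low(2)[where A=A and r=r and s=s and c=c, OF assms]
    unfolding drain_sets_def by auto
  then show ?thesis
    unfolding low_slots_def drainable_def using low_sum_decr_low(1)[where A=A and r=r and s=s and c=c, OF assms] by simp
qed

lemma low_slots_decr_high:
  assumes "finite A" "r \<in> A" "c \<le> s r" "1 \<le> c"
  shows "low_slots A (s(r := s r - 1)) c x \<le> low_slots A s c (Suc x)"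
proof (cases "s r = c")
  case True
  then show ?thesis
    using low_sum_decr_at_threshold(1)[where A=A and r=r and s=s and c=c, OF assms(1,2) True assms(4)]
      drainable_decr_at_threshold[where A=A and r=r and s=s and c=c, OF assms(1,2) True assms(4), of x]
    unfolding low_slots_def by (simp add: mult_le_mono2 flip: mult_Suc_right)
next
  case False
  then show ?thesis
    using low_sum_decr_high(1)[of r A c s] drainable_decr_high[of A r c s x] assms
    unfolding low_slots_def by simp
qed

lemma low_slots_le_decr_high:
  assumes "finite A" "r \<in> A" "c \<le> s r" "1 \<le> c"
    and small: "excess s c {i\<in>high_agents A s c. s i < s r} \<le> x"
  shows "low_slots A s c (Suc x) \<le> low_slots A (s(r := s r - 1)) c x"
proof (cases "s r = c")
  case True
  then show ?thesis
    using low_sum_decr_at_threshold(1)[where A=A and r=r and s=s and c=c, OF assms(1,2) True assms(4)]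
      drainable_le_decr_at_threshold[where A=A and r=r and s=s and c=c, OF assms(1,2) True assms(4), of x]
    unfolding low_slots_def by (simp add: mult_le_mono2 flip: mult_Suc_right)
next
  case False
  then show ?thesis
    using drainable_le_decr_high[OF assms(1,2) _ assms(4) small] low_sum_decr_high(1)[of r A c s] assms
    unfolding low_slots_def by simp
qed

lemma overflows_below_min_high:
  "v < min_high A s c w \<Longrightarrow> \<exists>t \<le> sum s A. overflows A s c w t v"
  using min_high_le[of s A c w v] by auto

lemma min_high_le_Suc:
  assumes "finite A" "r \<in> A" "0 < s r" "1 \<le> c"
  shows "min_high A s c w
    \<le> (if w 1 \<and> c \<le> s r then 1 else 0) + min_high A (s(r := s r - 1)) c (\<lambda>i. w (Suc i))"
proof (rule min_high_le, rule notI)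
  let ?s = "s(r := s r - 1)" and ?w = "\<lambda>i. w (Suc i)"
  let ?V = "min_high A ?s c ?w"
  fix t assume t: "t \<le> sum s A" and over: "overflows A s c w t ((if w 1 \<and> c \<le> s r then 1 else 0) + ?V)"
  obtain t' where t': "t = Suc t'"
    using over not_overflows_0 by (cases t) auto
  define y where "y = unmarked_upto ?w t' + ?V"
  have "overflows A ?s c ?w t' ?V"
  proof (cases "c \<le> s r")
    case True
    then show ?thesis
      using over low_slots_decr_high[where A=A and r=r and s=s and c=c and x=y] assms
      unfolding overflows_def t' marked_upto_Suc unmarked_upto_Suc y_def
      by (cases "w 1") auto
  next
    case False
    then show ?thesis
      using over low_slots_decr_low[where A=A and r=r and s=s and c=c and x=y] assms
        low_slots_mono[OF assms(1), of y "Suc y" s c]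
      unfolding overflows_def t' marked_upto_Suc unmarked_upto_Suc y_def
      by (cases "w 1") auto
  qed
  moreover have "t' \<le> sum ?s A"
    using t t' sum_fun_upd_decr[where A=A and r=r and s=s, OF assms(1-3)] by simp
  ultimately show False
    using less_min_high[OF assms(1)] by blast
qed

lemma overflows_first_marked:
  assumes "finite A" "w 1" "1 \<le> c" and high: "\<forall>i\<in>A. 0 < s i \<longrightarrow> c \<le> s i"
  shows "overflows A s c w 1 0"
proof -
  have "low_sum A s c = 0"
    unfolding low_sum_def using high by (intro sum.neutral) force
  moreover obtain B where B: "B \<subseteq> high_agents A s c" "excess s c B \<le> 0" "card B = drainable A s c 0"
    using drainable_witness[OF assms(1)] by blast
  have "B = {}"
  proof (rule ccontr)
    assume "B \<noteq> {}"
    then obtain a where "a \<in> B" by blast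
    moreover have "finite B"
      using B(1) finite_high_agents[OF assms(1)] finite_subset by blast
    ultimately show False
      using B excess_remove[of B a s c] assms(3) by (auto simp: high_agents_def)
  qed
  moreover have "marked_upto w 1 = 1" "unmarked_upto w 1 = 0"
    using assms(2) marked_upto_Suc[of w 0] unmarked_plus_marked[of w 1] by simp_all
  ultimately show ?thesis
    using B(3) unfolding overflows_def low_slots_def by simp
qed

lemma min_high_marked_step:
  assumes "finite A" "r \<in> A" "0 < s r" "1 \<le> c" "w 1"
    and least: "\<forall>i\<in>A. 0 < s i \<longrightarrow> s r \<le> s i"
  shows "(if c \<le> s r then 1 else 0) + min_high A (s(r := s r - 1)) c (\<lambda>i. w (Suc i))
    \<le> min_high A s c w"
proof -
  let ?s = "s(r := s r - 1)" and ?w = "\<lambda>i. w (Suc i)"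
  let ?V = "min_high A s c w" and ?V' = "min_high A ?s c ?w"
  have total: "sum s A = Suc (sum ?s A)"
    using sum_fun_upd_decr[where A=A and r=r and s=s, OF assms(1-3)] .
  show ?thesis
  proof (cases "c \<le> s r")
    case False
    have "?V' \<le> ?V"
    proof (rule min_high_le, rule notI)
      fix t' assume t': "t' \<le> sum ?s A" and "overflows A ?s c ?w t' ?V"
      then have "overflows A s c w (Suc t') ?V"
        using low_slots_decr_low[where A=A and r=r and s=s and c=c and x="unmarked_upto ?w t' + ?V"]
          False assms
        unfolding overflows_def marked_upto_Suc unmarked_upto_Suc by simp
      then show False
        using min_high_not_overflows[of "Suc t'" s A c w] t' total by simp
    qed
    then show ?thesis
      using False by simp
  next
    case True
    have "{i\<in>high_agents A s c. s i < s r} = {}"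
      using least assms(4) by (auto simp: high_agents_def)
    then have small: "excess s c {i\<in>high_agents A s c. s i < s r} \<le> x" for x
      by (simp only: excess_def sum.empty)
    have step: "overflows A s c w (Suc t') (Suc v)" if "overflows A ?s c ?w t' v" for t' v
      using that low_slots_le_decr_high[OF assms(1,2) True assms(4) small, of "unmarked_upto ?w t' + v"]
        assms
      unfolding overflows_def marked_upto_Suc unmarked_upto_Suc by simp
    have "?V' < ?V"
    proof (cases "?V' = 0")
      case True
      have "overflows A s c w 1 0"
        using least \<open>c \<le> s r\<close> assms by (intro overflows_first_marked) auto
      then show ?thesis
        using less_min_high[OF assms(1), of 1 s] total True by simp
    next
      case False
      then obtain t' where "t' \<le> sum ?s A" "overflows A ?s c ?w t' (?V' - 1)"
        using overflows_below_min_high[of "?V' - 1" A ?s c ?w] by auto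
      then show ?thesis
        using step[of t' "?V' - 1"] False less_min_high[OF assms(1), of "Suc t'" s] total by simp
    qed
    then show ?thesis
      using True by simp
  qed
qed

lemma sum_initial_le_sum:
  fixes f :: "nat \<Rightarrow> nat"
  assumes mono: "\<forall>i j. a \<le> i \<and> i \<le> j \<and> j \<le> k \<longrightarrow> f i \<le> f j"
  shows "C \<subseteq> {a..k} \<Longrightarrow> q \<le> card C \<Longrightarrow> (\<Sum>i=a..<a+q. f i) \<le> sum f C"
proof (induction q arbitrary: C)
  case (Suc q)
  have fin: "finite C"
    using Suc.prems(1) finite_subset by blast
  define u where "u = Max C"
  have "C \<noteq> {}"
    using Suc.prems(2) by auto
  then have u: "u \<in> C" "C \<subseteq> {a..u}" "u \<le> k"
    using Suc.prems(1) fin unfolding u_def by auto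
  then have "a + q \<le> u"
    using Suc.prems(2) card_mono[OF _ u(2)] by simp
  then have "f (a + q) \<le> f u"
    using mono u(3) by auto
  moreover have "(\<Sum>i=a..<a+q. f i) \<le> sum f (C - {u})"
    using Suc.prems u fin by (intro Suc.IH) auto
  ultimately show ?case
    using fin u(1) by (simp add: sum.remove)
qed simp

lemma sum_eq_sum_diff_const:
  fixes s :: "'a \<Rightarrow> nat"
  assumes "\<forall>i\<in>B. M \<le> s i"
  shows "sum s B = (\<Sum>i\<in>B. s i - M) + M * card B"
proof (cases "finite B")
  case True
  have "(\<Sum>i\<in>B. s i - M) = sum s B - M * card B"
    using assms by (simp add: sum_subtractf_nat mult.commute)
  moreover have "M * card B \<le> sum s B"
    using assms sum_mono[of B "\<lambda>_. M" s] by (simp add: mult.commute)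
  ultimately show ?thesis by simp
qed simp

lemma sum_eq_excess: "\<forall>i\<in>B. c \<le> s i \<Longrightarrow> sum s B = excess s c B + (c - 1) * card B"
  unfolding excess_def by (rule sum_eq_sum_diff_const) auto

lemma sum_eq_low_sum_excess:
  assumes "finite A" "1 \<le> c"
  shows "sum s A = low_sum A s c + excess s c (high_agents A s c) + (c - 1) * card (high_agents A s c)"
proof -
  have "sum s A = low_sum A s c + sum s (high_agents A s c)"
    unfolding low_sum_def high_agents_def using assms(1)
    by (subst sum.union_disjoint[symmetric]) (auto intro: sum.cong)
  moreover have "sum s (high_agents A s c) = excess s c (high_agents A s c) + (c - 1) * card (high_agents A s c)"
    by (rule sum_eq_excess) (simp add: high_agents_def)
  ultimately show ?thesis
    by simp
qed

text \<open>If all high agents could be drained, the whole capacity would be used up.\<close>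

lemma drainable_lt_card_high_agents:
  assumes "finite A" "1 \<le> c" "low_sum A s c + (c - 1) * drainable A s c x + x < sum s A"
  shows "drainable A s c x < card (high_agents A s c)"
proof (rule ccontr)
  assume "\<not> ?thesis"
  then have full: "drainable A s c x = card (high_agents A s c)"
    using drainable_le_card_high_agents[OF assms(1), of s c x] by simp
  obtain B where B: "B \<subseteq> high_agents A s c" "excess s c B \<le> x" "card B = drainable A s c x"
    using drainable_witness[OF assms(1)] by blast
  then have "B = high_agents A s c"
    using full card_subset_eq[OF finite_high_agents[OF assms(1)] B(1)] by simp
  then show False
    using assms B(2) full sum_eq_low_sum_excess[OF assms(1,2), of s] by simp
qed

lemma high_agents_sorted:
  assumes sorted: "\<forall>i j. 1 \<le> i \<and> i \<le> j \<and> j \<le> k \<longrightarrow> m i \<le> m j"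
    and "high_agents {1..k} m c \<noteq> {}"
  obtains g where "g \<in> {1..k}" "high_agents {1..k} m c = {g..k}"
proof -
  define g where "g = (LEAST i. i \<in> high_agents {1..k} m c)"
  have g: "g \<in> high_agents {1..k} m c"
    unfolding g_def using assms(2) by (auto intro: LeastI)
  have "i \<in> {g..k}" if "i \<in> high_agents {1..k} m c" for i
    using that Least_le[of "\<lambda>i. i \<in> high_agents {1..k} m c" i]
    unfolding g_def high_agents_def by simp
  moreover have "i \<in> high_agents {1..k} m c" if i: "i \<in> {g..k}" for i
  proof -
    have "g \<in> {1..k}" "c \<le> m g"
      using g by (simp_all add: high_agents_def)
    moreover have "m g \<le> m i"
      using sorted[rule_format, of g i] calculation(1) i by simp
    ultimately show ?thesis
      using i by (simp add: high_agents_def)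
  qed
  ultimately have "high_agents {1..k} m c = {g..k}"
    by blast
  moreover have "g \<in> {1..k}"
    using g by (simp add: high_agents_def)
  ultimately show thesis
    using that by blast
qed

lemma low_sum_sorted:
  assumes "high_agents {1..k} m c = {g..k}" "g \<in> {1..k}"
  shows "low_sum {1..k} m c = (\<Sum>i=1..<g. m i)"
proof -
  have "i \<in> {i\<in>{1..k}. m i < c} \<longleftrightarrow> i \<in> {1..<g}" for i
  proof -
    have "i \<in> high_agents {1..k} m c \<longleftrightarrow> i \<in> {g..k}"
      using assms(1) by simp
    then show ?thesis
      using assms(2) by (auto simp: high_agents_def)
  qed
  then show ?thesis
    unfolding low_sum_def by (metis (no_types, lifting) set_eqI)
qed

section \<open>ThresholdAllocation\<close>

definition Z_L :: "(nat \<Rightarrow> nat) \<Rightarrow> nat \<Rightarrow> nat \<Rightarrow> nat" where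
  "Z_L m \<gamma> h = (\<Sum>i=1..h-1. min (m i) (m0 m (\<gamma> - 1)))"

definition Z_H :: "(nat \<Rightarrow> nat) \<Rightarrow> nat \<Rightarrow> nat \<Rightarrow> nat" where
  "Z_H m \<gamma> h = (\<Sum>i=\<gamma>..h. m i - m0 m (\<gamma> - 1))"

definition threshold_accepts :: "nat \<Rightarrow> (nat \<Rightarrow> nat) \<Rightarrow> (nat \<Rightarrow> bool) \<Rightarrow> nat \<Rightarrow> bool" where
  "threshold_accepts k m w \<gamma> \<longleftrightarrow>
     m0 m \<gamma> \<noteq> m0 m (\<gamma> - 1) \<and> (\<exists>h\<in>{\<gamma>..k}. Z_L m \<gamma> h \<le> marked_upto w (Z_L m \<gamma> h + Z_H m \<gamma> h))"

definition threshold_alloc :: "nat \<Rightarrow> (nat \<Rightarrow> nat) \<Rightarrow> (nat \<Rightarrow> bool) \<Rightarrow> nat" where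
  "threshold_alloc k m w = (GREATEST \<gamma>. \<gamma> \<in> {1..k} \<and> threshold_accepts k m w \<gamma>)"

lemma TA_eq_threshold_alloc: "TA k m T = threshold_alloc k m (\<lambda>i. T 1 < T i)"
  unfolding TA_def threshold_alloc_def TA_accepts_def threshold_accepts_def Z_L_def Z_H_def
    marked_upto_def Let_def by simp

lemma threshold_alloc_greatest:
  assumes "1 \<le> k" "0 < m 1"
  shows "threshold_alloc k m w \<in> {1..k}"
    and "threshold_accepts k m w (threshold_alloc k m w)"
    and "\<And>\<gamma>. \<gamma> \<in> {threshold_alloc k m w<..k} \<Longrightarrow> \<not> threshold_accepts k m w \<gamma>"
proof -
  let ?P = "\<lambda>\<gamma>. \<gamma> \<in> {1..k} \<and> threshold_accepts k m w \<gamma>"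
  have "threshold_accepts k m w 1"
    unfolding threshold_accepts_def m0_def Z_L_def using assms by (auto intro!: bexI[of _ 1])
  then have "?P (Greatest ?P)"
    using assms by (intro GreatestI_nat[where P = ?P and k = 1 and b = k]) auto
  then show "threshold_alloc k m w \<in> {1..k}" "threshold_accepts k m w (threshold_alloc k m w)"
    unfolding threshold_alloc_def by auto
  show "\<not> threshold_accepts k m w \<gamma>" if "\<gamma> \<in> {threshold_alloc k m w<..k}" for \<gamma>
  proof
    assume "threshold_accepts k m w \<gamma>"
    then have "\<gamma> \<le> threshold_alloc k m w"
      unfolding threshold_alloc_def using that by (intro Greatest_le_nat[where P = ?P and b = k]) auto
    then show False
      using that by simp
  qed
qed

lemma Z_L_sorted:
  fixes m :: "nat \<Rightarrow> nat"
  assumes sorted: "\<forall>i j. 1 \<le> i \<and> i \<le> j \<and> j \<le> k \<longrightarrow> m i \<le> m j"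
    and "2 \<le> \<gamma>" "\<gamma> \<le> h" "h \<le> k"
  shows "Z_L m \<gamma> h = (\<Sum>i=1..<\<gamma>. m i) + (h - \<gamma>) * m (\<gamma> - 1)"
proof -
  let ?M = "m (\<gamma> - 1)"
  have "{1..h-1} = {1..<h}"
    using assms by auto
  then have "Z_L m \<gamma> h = (\<Sum>i=1..<h. min (m i) ?M)"
    unfolding Z_L_def m0_def using assms(2) by simp
  also have "\<dots> = (\<Sum>i=1..<\<gamma>. min (m i) ?M) + (\<Sum>i=\<gamma>..<h. min (m i) ?M)"
    using assms(2,3) by (simp add: sum.atLeastLessThan_concat)
  also have "(\<Sum>i=1..<\<gamma>. min (m i) ?M) = (\<Sum>i=1..<\<gamma>. m i)"
  proof (rule sum.cong)
    fix i assume "i \<in> {1..<\<gamma>}"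
    then have "1 \<le> i \<and> i \<le> \<gamma> - 1 \<and> \<gamma> - 1 \<le> k"
      using assms by auto
    then have "m i \<le> ?M"
      using sorted by blast
    then show "min (m i) ?M = m i" by simp
  qed simp
  also have "(\<Sum>i=\<gamma>..<h. min (m i) ?M) = (\<Sum>i=\<gamma>..<h. ?M)"
  proof (rule sum.cong)
    fix i assume "i \<in> {\<gamma>..<h}"
    then have "1 \<le> \<gamma> - 1 \<and> \<gamma> - 1 \<le> i \<and> i \<le> k"
      using assms by auto
    then have "?M \<le> m i"
      using sorted by blast
    then show "min (m i) ?M = ?M" by simp
  qed simp
  finally show ?thesis by simp
qed

lemma Z_L_plus_Z_H_le_sum:
  fixes m :: "nat \<Rightarrow> nat"
  assumes sorted: "\<forall>i j. 1 \<le> i \<and> i \<le> j \<and> j \<le> k \<longrightarrow> m i \<le> m j"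
    and "2 \<le> \<gamma>" "\<gamma> \<le> h" "h \<le> k"
  shows "Z_L m \<gamma> h + Z_H m \<gamma> h \<le> sum m {1..k}"
proof -
  let ?M = "m (\<gamma> - 1)"
  have "\<forall>i\<in>{\<gamma>..h}. ?M \<le> m i"
  proof
    fix i assume "i \<in> {\<gamma>..h}"
    then have "1 \<le> \<gamma> - 1 \<and> \<gamma> - 1 \<le> i \<and> i \<le> k"
      using assms by auto
    then show "?M \<le> m i"
      using sorted by blast
  qed
  then have "(\<Sum>i=\<gamma>..h. m i) = Z_H m \<gamma> h + ?M * (Suc h - \<gamma>)"
    unfolding Z_H_def m0_def using assms(2) sum_eq_sum_diff_const[of "{\<gamma>..h}" ?M m] by simp
  then have "Z_L m \<gamma> h + Z_H m \<gamma> h + ?M = (\<Sum>i=1..<\<gamma>. m i) + (\<Sum>i=\<gamma>..h. m i)"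
  proof -
    have "Suc h - \<gamma> = Suc (h - \<gamma>)"
      using assms by simp
    then show ?thesis
      using Z_L_sorted[OF assms] \<open>(\<Sum>i=\<gamma>..h. m i) = Z_H m \<gamma> h + ?M * (Suc h - \<gamma>)\<close>
      by (simp add: mult.commute)
  qed
  also have "\<dots> = (\<Sum>i=1..h. m i)"
  proof -
    have "{1..<\<gamma>} \<union> {\<gamma>..h} = {1..h}"
      using assms(2,3) by auto
    then show ?thesis
      by (metis finite_atLeastLessThan finite_atLeastAtMost ivl_disj_int_two(7) sum.union_disjoint)
  qed
  also have "\<dots> \<le> sum m {1..k}"
    using assms(4) by (intro sum_mono2) auto
  finally show ?thesis by simp
qed

lemma drainable_sorted_le:
  fixes m :: "nat \<Rightarrow> nat"
  assumes sorted: "\<forall>i j. 1 \<le> i \<and> i \<le> j \<and> j \<le> k \<longrightarrow> m i \<le> m j"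
    and high: "high_agents {1..k} m c = {g..k}" "1 \<le> g"
    and costly: "x < excess m c {g..<g + Suc q}"
  shows "drainable {1..k} m c x \<le> q"
proof (rule ccontr)
  assume many: "\<not> drainable {1..k} m c x \<le> q"
  obtain B where B: "B \<subseteq> high_agents {1..k} m c" "excess m c B \<le> x" "card B = drainable {1..k} m c x"
    using drainable_witness[of "{1..k}"] by blast
  have "\<forall>i j. g \<le> i \<and> i \<le> j \<and> j \<le> k \<longrightarrow> m i - (c - 1) \<le> m j - (c - 1)"
    using sorted high(2) by (meson diff_le_mono le_trans)
  then have "excess m c {g..<g + Suc q} \<le> excess m c B"
    unfolding excess_def using B(1,3) high(1) many
    by (intro sum_initial_le_sum[of g k _ B "Suc q"]) auto
  then show False
    using B(2) costly by simp
qed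

lemma diff_lt_unmarked_upto:
  "l \<le> z \<Longrightarrow> marked_upto w z < l \<Longrightarrow> l \<le> marked_upto w t \<Longrightarrow> z - l < unmarked_upto w t"
proof -
  assume "l \<le> z" and z: "marked_upto w z < l" and t: "l \<le> marked_upto w t"
  then have "z < t"
    using marked_upto_mono[of t z w] by linarith
  then have "unmarked_upto w z \<le> unmarked_upto w t"
    by (simp add: unmarked_upto_mono)
  then show ?thesis
    using \<open>l \<le> z\<close> z unmarked_plus_marked[of w z] by linarith
qed

lemma overflows_Suc_unmarked:
  assumes "\<not> w 1" "overflows A s' c (\<lambda>i. w (Suc i)) t v"
    and "low_slots A s c (Suc (unmarked_upto (\<lambda>i. w (Suc i)) t + v))
      \<le> low_slots A s' c (unmarked_upto (\<lambda>i. w (Suc i)) t + v)"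
  shows "overflows A s c w (Suc t) v"
  using assms unfolding overflows_def marked_upto_Suc unmarked_upto_Suc by simp

lemma high_agents_sorted_above:
  fixes m :: "nat \<Rightarrow> nat"
  assumes sorted: "\<forall>i j. 1 \<le> i \<and> i \<le> j \<and> j \<le> k \<longrightarrow> m i \<le> m j"
    and b: "b \<in> {1..k}" "m b < c" and "high_agents {1..k} m c \<noteq> {}"
  obtains g where "g \<in> {1..k}" "high_agents {1..k} m c = {g..k}" "b < g" "m (g - 1) < c" "c \<le> m g"
proof -
  obtain g where g: "g \<in> {1..k}" "high_agents {1..k} m c = {g..k}"
    using high_agents_sorted[OF sorted assms(4)] by blast
  have "b \<notin> high_agents {1..k} m c"
    using b by (simp add: high_agents_def)
  then have "b < g"
    using g(2) b(1) by auto
  have "g - 1 \<notin> high_agents {1..k} m c"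
    using g by auto
  then have "m (g - 1) < c"
    using \<open>b < g\<close> b(1) g(1) by (auto simp: high_agents_def)
  moreover have "g \<in> high_agents {1..k} m c"
    using g by simp
  ultimately show thesis
    using that g \<open>b < g\<close> by (simp add: high_agents_def)
qed

lemma not_overflows_decr_below:
  fixes m :: "nat \<Rightarrow> nat"
  assumes sorted: "\<forall>i j. 1 \<le> i \<and> i \<le> j \<and> j \<le> k \<longrightarrow> m i \<le> m j"
    and b: "b \<in> {1..k}" "0 < m b" "m b < c" and "\<not> w 1"
    and rejected: "\<forall>\<gamma>\<in>{b<..k}. \<not> threshold_accepts k m w \<gamma>"
    and t: "t \<le> sum (m(b := m b - 1)) {1..k}"
  shows "\<not> overflows {1..k} (m(b := m b - 1)) c (\<lambda>i. w (Suc i)) t v"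
proof
  let ?A = "{1..k}" and ?w = "\<lambda>i. w (Suc i)"
  define x where "x = unmarked_upto ?w t + v"
  define J where "J = drainable ?A m c x"
  assume "overflows ?A (m(b := m b - 1)) c ?w t v"
  then have over: "v + low_sum ?A m c + (c - 1) * J \<le> marked_upto w (Suc t)"
    using low_slots_decr_low[where A = ?A and r = b and s = m and c = c and x = x] b \<open>\<not> w 1\<close>
    unfolding overflows_def low_slots_def marked_upto_Suc J_def x_def by simp
  have "sum m ?A = Suc (sum (m(b := m b - 1)) ?A)"
    using sum_fun_upd_decr[where A = ?A and r = b and s = m] b by simp
  then have "low_sum ?A m c + (c - 1) * J + x < sum m ?A"
    using over t \<open>\<not> w 1\<close> unmarked_plus_marked[of ?w t]
    unfolding x_def marked_upto_Suc by simp
  then have "J < card (high_agents ?A m c)"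
    unfolding J_def using b by (intro drainable_lt_card_high_agents) auto
  then have "high_agents ?A m c \<noteq> {}"
    by auto
  then obtain g where g: "g \<in> ?A" "high_agents ?A m c = {g..k}"
    and "b < g" and below: "m (g - 1) < c" and "c \<le> m g"
    using high_agents_sorted_above[OF sorted b(1,3)] by blast
  define h where "h = g + J"
  have "J < Suc k - g"
    using \<open>J < card (high_agents ?A m c)\<close> g(2) by simp
  then have h: "g \<le> h" "h \<le> k"
    unfolding h_def by auto
  have "m0 m g \<noteq> m0 m (g - 1)"
    using below \<open>c \<le> m g\<close> \<open>b < g\<close> b(1) by (auto simp: m0_def)
  moreover have "\<not> threshold_accepts k m w g"
    using rejected \<open>b < g\<close> g(1) by simp
  ultimately have rejected_g: "marked_upto w (Z_L m g h + Z_H m g h) < Z_L m g h"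
    using h g(1) unfolding threshold_accepts_def by (auto simp: not_le)
  have "Z_L m g h = low_sum ?A m c + J * m (g - 1)"
    using Z_L_sorted[OF sorted _ h] low_sum_sorted[OF g(2,1)] \<open>b < g\<close> b(1) h_def by simp
  moreover have "J * m (g - 1) \<le> (c - 1) * J"
    using below by (simp add: mult.commute less_imp_le_nat le_diff_conv2)
  ultimately have "Z_L m g h \<le> marked_upto w (Suc t)"
    using over by linarith
  then have "Z_H m g h < Suc (unmarked_upto ?w t)"
    using diff_lt_unmarked_upto[OF _ rejected_g, of "Suc t"] unmarked_upto_Suc[of w t] \<open>\<not> w 1\<close>
    by simp
  moreover have "excess m c {g..h} \<le> Z_H m g h"
    unfolding excess_def Z_H_def m0_def using below \<open>b < g\<close> by (intro sum_mono) auto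
  moreover have "{g..h} \<subseteq> high_agents ?A m c"
    using g(2) h by simp
  ultimately have "card {g..h} \<le> J"
    unfolding J_def x_def by (intro drainable_ge) auto
  then show False
    unfolding h_def by simp
qed

lemma high_agents_below_sorted:
  fixes m :: "nat \<Rightarrow> nat"
  assumes sorted: "\<forall>i j. 1 \<le> i \<and> i \<le> j \<and> j \<le> k \<longrightarrow> m i \<le> m j"
    and g: "high_agents {1..k} m c = {g..k}" "g \<in> {1..k}"
    and b: "2 \<le> b" "b \<le> k" "m (b - 1) < m b"
  shows "{i\<in>high_agents {1..k} m c. m i < m b} = {g..<b}"
proof -
  have "m i < m b \<longleftrightarrow> i < b" if "i \<in> {g..k}" for i
  proof (cases "i < b")
    case True
    then have "1 \<le> i \<and> i \<le> b - 1 \<and> b - 1 \<le> k"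
      using that g(2) b(2) by auto
    then have "m i \<le> m (b - 1)"
      using sorted by blast
    then show ?thesis
      using True b(3) by simp
  next
    case False
    then have "1 \<le> b \<and> b \<le> i \<and> i \<le> k"
      using that b(1) by auto
    then show ?thesis
      using False sorted by (meson not_le)
  qed
  then show ?thesis
    using g(1) b(2) by auto
qed

lemma Z_H_lt_excess:
  fixes m :: "nat \<Rightarrow> nat"
  assumes sorted: "\<forall>i j. 1 \<le> i \<and> i \<le> j \<and> j \<le> k \<longrightarrow> m i \<le> m j"
    and "2 \<le> b" "b \<le> h" "h \<le> k" "1 \<le> c" "c \<le> m (b - 1)" "m (b - 1) < m b"
  shows "Z_H m b h < excess m c {b..h}"
proof -
  have "(\<Sum>i=b..h. Suc (m i - m (b - 1))) \<le> excess m c {b..h}"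
    unfolding excess_def
  proof (rule sum_mono)
    fix i assume "i \<in> {b..h}"
    then have "1 \<le> b \<and> b \<le> i \<and> i \<le> k"
      using assms by auto
    then have "m b \<le> m i"
      using sorted by blast
    then show "Suc (m i - m (b - 1)) \<le> m i - (c - 1)"
      using assms(5-7) by linarith
  qed
  moreover have "Z_H m b h < (\<Sum>i=b..h. Suc (m i - m (b - 1)))"
    unfolding Z_H_def m0_def using assms(2,3) by (intro sum_strict_mono_ex1) auto
  ultimately show ?thesis by simp
qed

text \<open>If the agents below b cannot all be drained by the v high tasks, then acceptance of
  b produces a prefix with too many marked tasks.\<close>

lemma overflows_of_accepts:
  fixes m :: "nat \<Rightarrow> nat"
  assumes sorted: "\<forall>i j. 1 \<le> i \<and> i \<le> j \<and> j \<le> k \<longrightarrow> m i \<le> m j"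
    and b: "2 \<le> b" "1 \<le> c" "c \<le> m (b - 1)" "m (b - 1) < m b"
    and h: "h \<in> {b..k}" "Z_L m b h \<le> marked_upto w (Z_L m b h + Z_H m b h)"
    and v: "v < excess m c {i\<in>high_agents {1..k} m c. m i < m b}"
  shows "overflows {1..k} m c w (Z_L m b h + Z_H m b h) v"
proof -
  let ?A = "{1..k}" and ?M = "m (b - 1)" and ?Z = "Z_L m b h + Z_H m b h"
  have "b - 1 \<in> high_agents ?A m c"
    using b h by (auto simp: high_agents_def)
  then obtain g where g: "g \<in> ?A" "high_agents ?A m c = {g..k}"
    using high_agents_sorted[OF sorted] by blast
  have "g < b"
    using \<open>b - 1 \<in> high_agents ?A m c\<close> g(2) b(1) by auto
  have lower: "{i\<in>high_agents ?A m c. m i < m b} = {g..<b}"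
    using high_agents_below_sorted[OF sorted g(2,1) b(1) _ b(4)] h(1) by simp
  define R where "R = excess m c {g..<b}"
  have "Z_H m b h < excess m c {b..h}"
    using Z_H_lt_excess[OF sorted b(1) _ _ b(2-4)] h(1) by simp
  moreover have "excess m c {g..<Suc h} = R + excess m c {b..<Suc h}"
    unfolding R_def excess_def using \<open>g < b\<close> h(1) by (simp add: sum.atLeastLessThan_concat)
  moreover have "unmarked_upto w ?Z \<le> Z_H m b h"
    using h(2) unmarked_plus_marked[of w ?Z] by linarith
  ultimately have "unmarked_upto w ?Z + v < excess m c {g..<g + Suc (h - g)}"
    using v lower \<open>g < b\<close> h(1) unfolding R_def by (simp add: atLeastLessThanSuc_atLeastAtMost)
  then have "drainable ?A m c (unmarked_upto w ?Z + v) \<le> h - g"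
    using g(1) by (intro drainable_sorted_le[OF sorted g(2)]) auto
  then have J: "drainable ?A m c (unmarked_upto w ?Z + v) \<le> (b - g) + (h - b)"
    using \<open>g < b\<close> h(1) by simp
  have "(\<Sum>i=g..<b. m i) = R + (c - 1) * (b - g)"
  proof -
    have "{g..<b} \<subseteq> {g..k}"
      using \<open>g < b\<close> h(1) by auto
    then have "{g..<b} \<subseteq> high_agents ?A m c"
      using g(2) by simp
    then have "\<forall>i\<in>{g..<b}. c \<le> m i"
      by (auto simp: high_agents_def)
    then show ?thesis
      unfolding R_def using sum_eq_excess[of "{g..<b}" c m] by simp
  qed
  moreover have "(\<Sum>i=1..<b. m i) = (\<Sum>i=1..<g. m i) + (\<Sum>i=g..<b. m i)"
    using g(1) \<open>g < b\<close> by (simp add: sum.atLeastLessThan_concat)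
  ultimately have "Z_L m b h = low_sum ?A m c + R + (c - 1) * (b - g) + (h - b) * ?M"
    using Z_L_sorted[OF sorted b(1)] low_sum_sorted[OF g(2,1)] h(1) by simp
  moreover have "(c - 1) * (h - b) \<le> (h - b) * ?M"
  proof -
    have "c - 1 \<le> ?M"
      using b(3) by linarith
    then show ?thesis
      by (simp add: mult.commute)
  qed
  ultimately have "v + low_slots ?A m c (unmarked_upto w ?Z + v) < Z_L m b h"
    using v[unfolded lower] mult_le_mono2[OF J, of "c - 1"] unfolding low_slots_def R_def add_mult_distrib2
    by linarith
  then show ?thesis
    using h(2) unfolding overflows_def by simp
qed

lemma threshold_accepts_lower_high:
  fixes m :: "nat \<Rightarrow> nat"
  assumes sorted: "\<forall>i j. 1 \<le> i \<and> i \<le> j \<and> j \<le> k \<longrightarrow> m i \<le> m j"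
    and b: "b \<in> {1..k}" "threshold_accepts k m w b"
    and i: "i \<in> high_agents {1..k} m c" "m i < m b"
  shows "2 \<le> b" "c \<le> m (b - 1)" "m (b - 1) < m b"
proof -
  have "i \<in> {1..k}" "c \<le> m i"
    using i(1) by (simp_all add: high_agents_def)
  have "i < b"
  proof (rule ccontr)
    assume "\<not> i < b"
    then have "1 \<le> b \<and> b \<le> i \<and> i \<le> k"
      using b(1) \<open>i \<in> {1..k}\<close> by auto
    then show False
      using sorted i(2) by (meson not_le)
  qed
  then have "1 \<le> i \<and> i \<le> b - 1 \<and> b - 1 \<le> k" "1 \<le> b - 1 \<and> b - 1 \<le> b \<and> b \<le> k"
    using \<open>i \<in> {1..k}\<close> b(1) by auto
  then have "m i \<le> m (b - 1)" "m (b - 1) \<le> m b"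
    using sorted by blast+
  moreover have "m0 m b \<noteq> m0 m (b - 1)"
    using b(2) unfolding threshold_accepts_def by blast
  ultimately show "2 \<le> b" "c \<le> m (b - 1)" "m (b - 1) < m b"
    using \<open>i < b\<close> \<open>i \<in> {1..k}\<close> \<open>c \<le> m i\<close> unfolding m0_def by auto
qed

lemma min_high_decr_threshold_alloc:
  fixes m :: "nat \<Rightarrow> nat"
  assumes "1 \<le> k" "0 < m 1"
    and sorted: "\<forall>i j. 1 \<le> i \<and> i \<le> j \<and> j \<le> k \<longrightarrow> m i \<le> m j"
    and "\<not> w 1" "1 \<le> c"
  defines "b \<equiv> threshold_alloc k m w"
  shows "min_high {1..k} (m(b := m b - 1)) c (\<lambda>i. w (Suc i)) \<le> min_high {1..k} m c w"
proof (rule min_high_le, rule notI)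
  let ?A = "{1..k}" and ?s = "m(b := m b - 1)" and ?w = "\<lambda>i. w (Suc i)"
  let ?V = "min_high ?A m c w"
  fix t assume t: "t \<le> sum ?s ?A" and over: "overflows ?A ?s c ?w t ?V"
  note greatest = threshold_alloc_greatest[where k = k and m = m and w = w, OF assms(1,2), folded b_def]
  have b: "b \<in> ?A" "threshold_accepts k m w b" "\<forall>\<gamma>\<in>{b<..k}. \<not> threshold_accepts k m w \<gamma>"
    using greatest by blast+
  have "0 < m b"
    using assms(2) sorted b(1) by (metis atLeastAtMost_iff le_refl less_le_trans)
  have total: "sum m ?A = Suc (sum ?s ?A)"
    using sum_fun_upd_decr[where A = ?A and r = b and s = m] b(1) \<open>0 < m b\<close> by simp
  define x where "x = unmarked_upto ?w t + ?V"
  have "\<exists>t' \<le> sum m ?A. overflows ?A m c w t' ?V"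
  proof (cases "c \<le> m b")
    case False
    then show ?thesis
      using not_overflows_decr_below[OF sorted b(1) \<open>0 < m b\<close> _ \<open>\<not> w 1\<close> b(3) t] over by simp
  next
    case True
    show ?thesis
    proof (cases "excess m c {i\<in>high_agents ?A m c. m i < m b} \<le> x")
      case True
      then have "low_slots ?A m c (Suc x) \<le> low_slots ?A ?s c x"
        using low_slots_le_decr_high[where A = ?A and r = b and s = m, OF _ b(1) \<open>c \<le> m b\<close> \<open>1 \<le> c\<close>]
        by simp
      then have "overflows ?A m c w (Suc t) ?V"
        unfolding x_def by (rule overflows_Suc_unmarked[OF \<open>\<not> w 1\<close> over])
      then show ?thesis
        using t total by auto
    next
      case False
      have "{i\<in>high_agents ?A m c. m i < m b} \<noteq> {}"
      proof
        assume "{i\<in>high_agents ?A m c. m i < m b} = {}"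
        then show False
          using False by (simp only: excess_def sum.empty)
      qed
      then obtain i where "i \<in> high_agents ?A m c" "m i < m b"
        by blast
      then have lower: "2 \<le> b" "c \<le> m (b - 1)" "m (b - 1) < m b"
        using threshold_accepts_lower_high[OF sorted b(1,2)] by blast+
      obtain h where h: "h \<in> {b..k}" "Z_L m b h \<le> marked_upto w (Z_L m b h + Z_H m b h)"
        using b(2) unfolding threshold_accepts_def by blast
      have "?V < excess m c {i\<in>high_agents ?A m c. m i < m b}"
        using False unfolding x_def by simp
      then have "overflows ?A m c w (Z_L m b h + Z_H m b h) ?V"
        using overflows_of_accepts[OF sorted lower(1) \<open>1 \<le> c\<close> lower(2,3) h] by blast
      then show ?thesis
        using Z_L_plus_Z_H_le_sum[OF sorted lower(1)] h(1) by auto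
    qed
  qed
  then show False
    using less_min_high[of ?A] by blast
qed

lemma min_high_eqI:
  assumes "sum s A = sum s' A'" "\<And>x. low_slots A s c x = low_slots A' s' c x"
  shows "min_high A s c w = min_high A' s' c w"
  unfolding min_high_def overflows_def assms ..

lemma min_high_drop_empty:
  assumes "finite A" "B \<subseteq> A" "\<forall>i\<in>A - B. s i = 0" "1 \<le> c"
  shows "min_high A s c w = min_high B s c w"
proof (rule min_high_eqI)
  show "sum s A = sum s B"
    using assms by (intro sum.mono_neutral_right) auto
  have "low_sum A s c = low_sum B s c"
    unfolding low_sum_def using assms by (intro sum.mono_neutral_right) force+
  moreover have "high_agents A s c = high_agents B s c"
    using assms unfolding high_agents_def by force
  ultimately show "low_slots A s c x = low_slots B s c x" for x
    unfolding low_slots_def drainable_def drain_sets_def by simp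
qed

lemma min_high_reindex:
  assumes bij: "bij_betw \<sigma> A' B" and t: "\<forall>j\<in>A'. t j = s (\<sigma> j)"
  shows "min_high B s c w = min_high A' t c w"
proof (rule min_high_eqI)
  have inj: "inj_on \<sigma> C" if "C \<subseteq> A'" for C
    using bij that by (auto simp: bij_betw_def intro: inj_on_subset)
  have B: "B = \<sigma> ` A'"
    using bij by (simp add: bij_betw_def)
  have reindex: "(\<Sum>i\<in>\<sigma> ` C. f i) = (\<Sum>j\<in>C. f (\<sigma> j))" if "C \<subseteq> A'" for C and f :: "nat \<Rightarrow> nat"
    using sum.reindex[OF inj[OF that]] by simp
  show "sum s B = sum t A'"
    unfolding B using reindex[of A' s] t by simp
  have "{i\<in>B. s i < c} = \<sigma> ` {j\<in>A'. t j < c}"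
    unfolding B using t by auto
  then have low: "low_sum B s c = low_sum A' t c"
    unfolding low_sum_def using reindex[of "{j\<in>A'. t j < c}" s] t by simp
  have high: "high_agents B s c = \<sigma> ` high_agents A' t c"
    unfolding high_agents_def B using t by auto
  have "high_agents A' t c \<subseteq> A'"
    by (auto simp: high_agents_def)
  then have transfer: "excess s c (\<sigma> ` C) = excess t c C \<and> card (\<sigma> ` C) = card C"
    if "C \<subseteq> high_agents A' t c" for C
  proof -
    have "C \<subseteq> A'"
      using that \<open>high_agents A' t c \<subseteq> A'\<close> by blast
    moreover have "(\<Sum>j\<in>C. s (\<sigma> j) - (c - 1)) = (\<Sum>j\<in>C. t j - (c - 1))"
      using calculation t by (intro sum.cong) auto
    ultimately show ?thesis
      unfolding excess_def using reindex[of C "\<lambda>i. s i - (c - 1)"] card_image[OF inj[of C]] by simp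
  qed
  have "card ` drain_sets B s c x = card ` drain_sets A' t c x" for x
  proof (intro set_eqI iffI)
    fix n assume "n \<in> card ` drain_sets B s c x"
    then obtain D where D: "D \<subseteq> \<sigma> ` high_agents A' t c" "excess s c D \<le> x" "n = card D"
      unfolding drain_sets_def high by auto
    then obtain C where "C \<subseteq> high_agents A' t c" "D = \<sigma> ` C"
      by (auto simp: subset_image_iff)
    then show "n \<in> card ` drain_sets A' t c x"
      using D transfer unfolding drain_sets_def by auto
  next
    fix n assume "n \<in> card ` drain_sets A' t c x"
    then obtain C where "C \<subseteq> high_agents A' t c" "excess t c C \<le> x" "n = card C"
      unfolding drain_sets_def by auto
    then show "n \<in> card ` drain_sets B s c x"
      using transfer[of C] unfolding drain_sets_def high by (auto intro!: image_eqI[of _ _ "\<sigma> ` C"])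
  qed
  then show "low_slots B s c x = low_slots A' t c x" for x
    unfolding low_slots_def drainable_def low by simp
qed

lemma sorted_enumeration:
  fixes s :: "nat \<Rightarrow> nat"
  assumes "finite P"
  obtains \<sigma> where "bij_betw \<sigma> {1..card P} P"
    and "\<forall>i j. 1 \<le> i \<and> i \<le> j \<and> j \<le> card P \<longrightarrow> s (\<sigma> i) \<le> s (\<sigma> j)"
proof -
  define xs where "xs = sort_key s (sorted_list_of_set P)"
  have xs: "distinct xs" "set xs = P" "sorted (map s xs)"
    unfolding xs_def using assms by simp_all
  then have len: "length xs = card P"
    using distinct_card by fastforce
  have "bij_betw (\<lambda>i. i - 1) {1..card P} {..<length xs}"
    unfolding len by (rule bij_betw_byWitness[where f' = "\<lambda>i. i + 1"]) auto
  moreover have "bij_betw (\<lambda>i. xs ! i) {..<length xs} P"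
    using bij_betw_nth[OF xs(1)] xs(2) by auto
  ultimately have "bij_betw (\<lambda>i. xs ! (i - 1)) {1..card P} P"
    using bij_betw_trans by (fastforce simp: comp_def)
  moreover have "s (xs ! (i - 1)) \<le> s (xs ! (j - 1))" if "1 \<le> i" "i \<le> j" "j \<le> card P" for i j
    using sorted_nth_mono[OF xs(3), of "i - 1" "j - 1"] that len by simp
  ultimately show ?thesis
    using that by blast
qed

text \<open>An unmarked task can be served without raising min_high: apply ThresholdAllocation to
  the agents of positive remaining capacity, listed in increasing order of capacity.\<close>

lemma exists_unmarked_step:
  fixes s :: "nat \<Rightarrow> nat"
  assumes "\<exists>i\<in>{1..k}. 0 < s i" "\<not> w 1"
  obtains r where "r \<in> {1..k}" "0 < s r"
    "\<And>c. 1 \<le> c \<Longrightarrow> min_high {1..k} (s(r := s r - 1)) c (\<lambda>i. w (Suc i)) \<le> min_high {1..k} s c w"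
proof -
  define P where "P = {i\<in>{1..k}. 0 < s i}"
  define k' where "k' = card P"
  have "finite P" "P \<noteq> {}"
    using assms(1) unfolding P_def by auto
  then have "1 \<le> k'"
    unfolding k'_def by (simp add: Suc_le_eq card_gt_0_iff)
  obtain \<sigma> where bij: "bij_betw \<sigma> {1..k'} P"
    and sorted: "\<forall>i j. 1 \<le> i \<and> i \<le> j \<and> j \<le> k' \<longrightarrow> s (\<sigma> i) \<le> s (\<sigma> j)"
    using sorted_enumeration[OF \<open>finite P\<close>, of s] unfolding k'_def by blast
  define m where "m i = s (\<sigma> i)" for i
  have "\<sigma> 1 \<in> P"
    using bij \<open>1 \<le> k'\<close> by (auto dest: bij_betwE)
  then have "0 < m 1"
    unfolding m_def P_def by simp
  define b where "b = threshold_alloc k' m w"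
  have "b \<in> {1..k'}"
    unfolding b_def using threshold_alloc_greatest(1)[where m = m, OF \<open>1 \<le> k'\<close> \<open>0 < m 1\<close>] .
  define r where "r = \<sigma> b"
  have "r \<in> P"
    unfolding r_def using bij \<open>b \<in> {1..k'}\<close> by (auto dest: bij_betwE)
  have decr: "\<forall>j\<in>{1..k'}. (m(b := m b - 1)) j = (s(r := s r - 1)) (\<sigma> j)"
  proof
    fix j assume "j \<in> {1..k'}"
    then have "\<sigma> j = r \<longleftrightarrow> j = b"
      using inj_onD[OF bij_betw_imp_inj_on[OF bij]] \<open>b \<in> {1..k'}\<close> unfolding r_def by blast
    then show "(m(b := m b - 1)) j = (s(r := s r - 1)) (\<sigma> j)"
      unfolding m_def r_def by simp
  qed
  have sorted_m: "\<forall>i j. 1 \<le> i \<and> i \<le> j \<and> j \<le> k' \<longrightarrow> m i \<le> m j"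
    using sorted unfolding m_def .
  have "min_high {1..k} (s(r := s r - 1)) c (\<lambda>i. w (Suc i)) \<le> min_high {1..k} s c w" if "1 \<le> c" for c
  proof -
    have "min_high {1..k} s c w = min_high P s c w"
      using that by (intro min_high_drop_empty) (auto simp: P_def)
    also have "\<dots> = min_high {1..k'} m c w"
      by (rule min_high_reindex[OF bij]) (simp add: m_def)
    finally have orig: "min_high {1..k} s c w = min_high {1..k'} m c w" .
    have "min_high {1..k} (s(r := s r - 1)) c (\<lambda>i. w (Suc i)) = min_high P (s(r := s r - 1)) c (\<lambda>i. w (Suc i))"
      using that \<open>r \<in> P\<close> by (intro min_high_drop_empty) (auto simp: P_def)
    also have "\<dots> = min_high {1..k'} (m(b := m b - 1)) c (\<lambda>i. w (Suc i))"
      by (rule min_high_reindex[OF bij decr])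
    finally show ?thesis
      using orig min_high_decr_threshold_alloc[where m = m and w = w, OF \<open>1 \<le> k'\<close> \<open>0 < m 1\<close> sorted_m assms(2) that]
      unfolding b_def by simp
  qed
  moreover have "r \<in> {1..k}" "0 < s r"
    using \<open>r \<in> P\<close> unfolding P_def by auto
  ultimately show ?thesis
    using that by blast
qed

section \<open>Decision sequences\<close>

definition high_marked :: "(nat \<Rightarrow> nat) \<Rightarrow> (nat \<Rightarrow> nat) \<Rightarrow> (nat \<Rightarrow> bool) \<Rightarrow> nat \<Rightarrow> nat \<Rightarrow> nat" where
  "high_marked s y w c N = card {t\<in>{1..N}. w t \<and> c \<le> rem_cap s y t}"

definition seq_Cons :: "nat \<Rightarrow> (nat \<Rightarrow> nat) \<Rightarrow> nat \<Rightarrow> nat" where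
  "seq_Cons r y t = (if t = 1 then r else y (t - 1))"

lemma rem_cap_1: "rem_cap s y 1 = s (y 1)"
  unfolding rem_cap_def by simp

lemma rem_cap_Suc:
  assumes "1 \<le> t"
  shows "rem_cap s y (Suc t) = rem_cap (s(y 1 := s (y 1) - 1)) (\<lambda>u. y (Suc u)) t"
proof -
  obtain t0 where t0: "t = Suc t0"
    using assms by (cases t) auto
  have "{u\<in>{1..<Suc t}. y u = y (Suc t)} = {u\<in>{1..Suc t0}. y u = y (Suc t)}"
    unfolding t0 by auto
  moreover have "{u\<in>{1..t0}. y (Suc u) = y (Suc t)} = {u\<in>{1..<t}. y (Suc u) = y (Suc t)}"
    unfolding t0 by auto
  ultimately have "card {u\<in>{1..<Suc t}. y u = y (Suc t)}
      = (if y 1 = y (Suc t) then 1 else 0) + card {u\<in>{1..<t}. y (Suc u) = y (Suc t)}"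
    using card_filter_1_Suc[of t0 "\<lambda>u. y u = y (Suc t)"] by simp
  then show ?thesis
    unfolding rem_cap_def by (cases "y 1 = y (Suc t)") auto
qed

lemma rem_cap_cong:
  assumes "1 \<le> t" "\<And>u. 1 \<le> u \<Longrightarrow> u \<le> t \<Longrightarrow> y u = z u"
  shows "rem_cap s y t = rem_cap s z t"
proof -
  have "{u\<in>{1..<t}. y u = y t} = {u\<in>{1..<t}. z u = z t}"
    using assms by auto
  then show ?thesis
    unfolding rem_cap_def using assms by auto
qed

lemma high_marked_cong:
  assumes "\<And>u. 1 \<le> u \<Longrightarrow> u \<le> N \<Longrightarrow> y u = z u"
  shows "high_marked s y w c N = high_marked s z w c N"
proof -
  have "{t\<in>{1..N}. w t \<and> c \<le> rem_cap s y t} = {t\<in>{1..N}. w t \<and> c \<le> rem_cap s z t}"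
    using rem_cap_cong[of _ y z s] assms by auto
  then show ?thesis
    unfolding high_marked_def by simp
qed

lemma high_marked_Suc:
  "high_marked s y w c (Suc N) = (if w 1 \<and> c \<le> s (y 1) then 1 else 0)
     + high_marked (s(y 1 := s (y 1) - 1)) (\<lambda>u. y (Suc u)) (\<lambda>u. w (Suc u)) c N"
proof -
  have "{t\<in>{1..N}. w (Suc t) \<and> c \<le> rem_cap s y (Suc t)} =
      {t\<in>{1..N}. w (Suc t) \<and> c \<le> rem_cap (s(y 1 := s (y 1) - 1)) (\<lambda>u. y (Suc u)) t}"
    using rem_cap_Suc by auto
  then show ?thesis
    unfolding high_marked_def card_filter_1_Suc rem_cap_1 by simp
qed

lemma high_marked_seq_Cons:
  "high_marked s (seq_Cons r y) w c (Suc N) = (if w 1 \<and> c \<le> s r then 1 else 0)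
     + high_marked (s(r := s r - 1)) y (\<lambda>u. w (Suc u)) c N"
  using high_marked_Suc[of s "seq_Cons r y" w c N]
    high_marked_cong[of N "\<lambda>u. seq_Cons r y (Suc u)" y "s(r := s r - 1)" "\<lambda>u. w (Suc u)" c]
  by (simp add: seq_Cons_def)

lemma valid_seq_tl:
  assumes "valid_seq k s (Suc N) y"
  shows "valid_seq k (s(y 1 := s (y 1) - 1)) N (\<lambda>u. y (Suc u))" "y 1 \<in> {1..k}" "0 < s (y 1)"
proof -
  have range: "\<forall>t\<in>{1..Suc N}. y t \<in> {1..k}" and count: "\<forall>r\<in>{1..k}. card {t\<in>{1..Suc N}. y t = r} = s r"
    using assms unfolding valid_seq_def by auto
  then show "y 1 \<in> {1..k}"
    by auto
  then show "0 < s (y 1)"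
    using count card_filter_1_Suc[of N "\<lambda>t. y t = y 1"] by simp
  show "valid_seq k (s(y 1 := s (y 1) - 1)) N (\<lambda>u. y (Suc u))"
    unfolding valid_seq_def
  proof (intro conjI ballI)
    fix t assume "t \<in> {1..N}"
    then show "y (Suc t) \<in> {1..k}"
      using range by auto
  next
    fix r assume "r \<in> {1..k}"
    then show "card {t\<in>{1..N}. y (Suc t) = r} = (s(y 1 := s (y 1) - 1)) r"
      using count card_filter_1_Suc[of N "\<lambda>t. y t = r"] by (cases "y 1 = r") auto
  qed
qed

lemma valid_seq_Cons:
  assumes "valid_seq k (s(r := s r - 1)) N y" "r \<in> {1..k}" "0 < s r"
  shows "valid_seq k s (Suc N) (seq_Cons r y)"
  unfolding valid_seq_def
proof (intro conjI ballI)
  fix t assume "t \<in> {1..Suc N}"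
  then have "t = 1 \<or> t - 1 \<in> {1..N}"
    by auto
  then show "seq_Cons r y t \<in> {1..k}"
    using assms unfolding valid_seq_def seq_Cons_def by auto
next
  fix a assume "a \<in> {1..k}"
  have "{t\<in>{1..N}. seq_Cons r y (Suc t) = a} = {t\<in>{1..N}. y t = a}"
    by (auto simp: seq_Cons_def)
  then have "card {t\<in>{1..Suc N}. seq_Cons r y t = a} = (if r = a then 1 else 0) + card {t\<in>{1..N}. y t = a}"
    using card_filter_1_Suc[of N "\<lambda>t. seq_Cons r y t = a"] by (simp add: seq_Cons_def)
  then show "card {t\<in>{1..Suc N}. seq_Cons r y t = a} = s a"
    using assms \<open>a \<in> {1..k}\<close> unfolding valid_seq_def by (cases "r = a") auto
qed

lemma min_high_le_high_marked:
  "valid_seq k s N y \<Longrightarrow> 1 \<le> c \<Longrightarrow> min_high {1..k} s c w \<le> high_marked s y w c N"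
proof (induction N arbitrary: s y w)
  case 0
  then have "sum s {1..k} = 0"
    unfolding valid_seq_def by simp
  then show ?case
    using min_high_le[of s "{1..k}" c w 0] not_overflows_0 by simp
next
  case (Suc N)
  let ?r = "y 1"
  note tl = valid_seq_tl[OF Suc.prems(1)]
  have "min_high {1..k} s c w
      \<le> (if w 1 \<and> c \<le> s ?r then 1 else 0) + min_high {1..k} (s(?r := s ?r - 1)) c (\<lambda>u. w (Suc u))"
    using min_high_le_Suc[where A = "{1..k}" and r = ?r and s = s, OF _ tl(2,3) Suc.prems(2)] by simp
  also have "\<dots> \<le> (if w 1 \<and> c \<le> s ?r then 1 else 0)
      + high_marked (s(?r := s ?r - 1)) (\<lambda>u. y (Suc u)) (\<lambda>u. w (Suc u)) c N"
    using Suc.IH[OF tl(1) Suc.prems(2), where w = "\<lambda>u. w (Suc u)"] by (rule add_left_mono)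
  also have "\<dots> = high_marked s y w c (Suc N)"
    using high_marked_Suc[of s y w c N] by simp
  finally show ?case .
qed

lemma exists_min_high_step:
  fixes s :: "nat \<Rightarrow> nat"
  assumes "\<exists>i\<in>{1..k}. 0 < s i"
  obtains r where "r \<in> {1..k}" "0 < s r"
    "\<And>c. 1 \<le> c \<Longrightarrow> (if w 1 \<and> c \<le> s r then 1 else 0)
      + min_high {1..k} (s(r := s r - 1)) c (\<lambda>i. w (Suc i)) \<le> min_high {1..k} s c w"
proof (cases "w 1")
  case True
  obtain i where "i \<in> {1..k}" "0 < s i"
    using assms by blast
  then obtain r where r: "r \<in> {1..k}" "0 < s r" and least: "\<forall>j\<in>{1..k}. 0 < s j \<longrightarrow> s r \<le> s j"
    using ex_has_least_nat[of "\<lambda>j. j \<in> {1..k} \<and> 0 < s j" i s] by blast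
  show ?thesis
    using that[OF r] min_high_marked_step[where A = "{1..k}" and r = r and s = s and w = w, OF _ r _ True least]
      True by simp
next
  case False
  obtain r where "r \<in> {1..k}" "0 < s r"
    "\<And>c. 1 \<le> c \<Longrightarrow> min_high {1..k} (s(r := s r - 1)) c (\<lambda>i. w (Suc i)) \<le> min_high {1..k} s c w"
    using exists_unmarked_step[where s = s and w = w, OF assms False] by blast
  then show ?thesis
    using that False by simp
qed

lemma exists_optimal_seq:
  "N = sum s {1..k} \<Longrightarrow>
     \<exists>y. valid_seq k s N y \<and> (\<forall>c. 1 \<le> c \<longrightarrow> high_marked s y w c N \<le> min_high {1..k} s c w)"
proof (induction N arbitrary: s w)
  case 0
  then have "valid_seq k s 0 (\<lambda>_. 1)"
    unfolding valid_seq_def by simp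
  moreover have "high_marked s (\<lambda>_. 1) w c 0 = 0" for c
    unfolding high_marked_def by simp
  ultimately show ?case
    by auto
next
  case (Suc N)
  then have "\<exists>i\<in>{1..k}. 0 < s i"
    by (metis Suc_neq_Zero not_gr0 sum.neutral)
  from exists_min_high_step[where w = w, OF this] obtain r where r: "r \<in> {1..k}" "0 < s r"
    and step: "\<And>c. 1 \<le> c \<Longrightarrow> (if w 1 \<and> c \<le> s r then 1 else 0)
      + min_high {1..k} (s(r := s r - 1)) c (\<lambda>i. w (Suc i)) \<le> min_high {1..k} s c w"
    by blast
  have "N = sum (s(r := s r - 1)) {1..k}"
    using Suc.prems sum_fun_upd_decr[where A = "{1..k}" and r = r and s = s] r by simp
  then obtain y where y: "valid_seq k (s(r := s r - 1)) N y"
    and opt: "\<forall>c. 1 \<le> c \<longrightarrow> high_marked (s(r := s r - 1)) y (\<lambda>i. w (Suc i)) c N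
      \<le> min_high {1..k} (s(r := s r - 1)) c (\<lambda>i. w (Suc i))"
    using Suc.IH by blast
  have "high_marked s (seq_Cons r y) w c (Suc N) \<le> min_high {1..k} s c w" if "1 \<le> c" for c
    using high_marked_seq_Cons[of s r y w c N] opt step[OF that] that by fastforce
  then show ?case
    using valid_seq_Cons[OF y r] by blast
qed

section \<open>The cost\<close>

lemma sum_rank_weights_decr:
  fixes G :: "nat \<Rightarrow> real"
  assumes "finite A" "r \<in> A" "0 < s r"
  shows "(\<Sum>i\<in>A. \<Sum>j=1..s i. G j) = G (s r) + (\<Sum>i\<in>A. \<Sum>j=1..(s(r := s r - 1)) i. G j)"
proof -
  obtain p where p: "s r = Suc p"
    using assms(3) by (cases "s r") auto
  have "(\<Sum>i\<in>A - {r}. \<Sum>j=1..(s(r := s r - 1)) i. G j) = (\<Sum>i\<in>A - {r}. \<Sum>j=1..s i. G j)"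
    by (rule sum.cong) auto
  then show ?thesis
    using assms(1,2) p by (simp add: sum.remove)
qed

lemma sum_rem_cap:
  fixes G :: "nat \<Rightarrow> real"
  shows "valid_seq k s N y \<Longrightarrow> (\<Sum>t=1..N. G (rem_cap s y t)) = (\<Sum>r=1..k. \<Sum>j=1..s r. G j)"
proof (induction N arbitrary: s y)
  case 0
  then show ?case
    unfolding valid_seq_def by simp
next
  case (Suc N)
  note tl = valid_seq_tl[OF Suc.prems]
  have "(\<Sum>t=1..Suc N. G (rem_cap s y t)) = G (rem_cap s y 1) + (\<Sum>t=Suc 1..Suc N. G (rem_cap s y t))"
    by (rule sum.atLeast_Suc_atMost) simp
  also have "(\<Sum>t=Suc 1..Suc N. G (rem_cap s y t)) = (\<Sum>t=1..N. G (rem_cap s y (Suc t)))"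
    by (rule sum.shift_bounds_cl_Suc_ivl)
  also have "(\<Sum>t=1..N. G (rem_cap s y (Suc t)))
      = (\<Sum>t=1..N. G (rem_cap (s(y 1 := s (y 1) - 1)) (\<lambda>u. y (Suc u)) t))"
    by (rule sum.cong) (auto simp: rem_cap_Suc)
  also have "\<dots> = (\<Sum>r=1..k. \<Sum>j=1..(s(y 1 := s (y 1) - 1)) r. G j)"
    by (rule Suc.IH[OF tl(1)])
  finally show ?case
    using sum_rank_weights_decr[of "{1..k}" "y 1" s G] tl(2,3) rem_cap_1[of s y] by simp
qed

lemma telescope:
  fixes g :: "nat \<Rightarrow> real"
  assumes "q \<le> M"
  shows "g q = g 0 + (\<Sum>c=1..M. if c \<le> q then g c - g (c - 1) else 0)"
proof -
  have "(\<Sum>c=1..M. if c \<le> q then g c - g (c - 1) else 0) = (\<Sum>c\<in>{c\<in>{1..M}. c \<le> q}. g c - g (c - 1))"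
    by (rule sum.inter_filter[symmetric]) simp
  also have "{c\<in>{1..M}. c \<le> q} = {1..q}"
    using assms by auto
  also have "(\<Sum>c=1..q. g c - g (c - 1)) = g q - g 0"
    by (induction q) (auto simp: sum.atLeast1_atMost_eq)
  finally show ?thesis by simp
qed

lemma COST_eq_high_marked:
  fixes g T :: "nat \<Rightarrow> real"
  assumes valid: "valid_seq k m n y" and n: "n = (\<Sum>r=1..k. m r)"
    and T: "\<forall>i\<in>{1..n}. T i = H \<or> T i = L" "T 1 = H" "H < L"
  defines "w \<equiv> \<lambda>i. T 1 < T i"
  shows "COST g m n T y = H * (\<Sum>r=1..k. \<Sum>j=1..m r. g j)
     + (L - H) * (real (card {t\<in>{1..n}. w t}) * g 0
         + (\<Sum>c=1..n. (g c - g (c - 1)) * real (high_marked m y w c n)))"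
proof -
  define q where "q t = rem_cap m y t" for t
  define Ls where "Ls = {t\<in>{1..n}. w t}"
  have "T t = (if w t then L else H)" if "t \<in> {1..n}" for t
    using T(1)[rule_format, OF that] T(2,3) unfolding w_def by auto
  then have "COST g m n T y = (\<Sum>t=1..n. H * g (q t) + (L - H) * (if w t then g (q t) else 0))"
    unfolding COST_def q_def by (intro sum.cong) (simp_all add: algebra_simps)
  also have "\<dots> = H * (\<Sum>t=1..n. g (q t)) + (L - H) * (\<Sum>t=1..n. if w t then g (q t) else 0)"
    by (simp add: sum.distrib sum_distrib_left)
  also have "(\<Sum>t=1..n. if w t then g (q t) else 0) = (\<Sum>t\<in>Ls. g (q t))"
    unfolding Ls_def by (rule sum.inter_filter[symmetric]) simp
  also have "(\<Sum>t=1..n. g (q t)) = (\<Sum>r=1..k. \<Sum>j=1..m r. g j)"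
    unfolding q_def by (rule sum_rem_cap[OF valid])
  also have "(\<Sum>t\<in>Ls. g (q t)) = (\<Sum>t\<in>Ls. g 0 + (\<Sum>c=1..n. if c \<le> q t then g c - g (c - 1) else 0))"
  proof (rule sum.cong[OF refl], rule telescope)
    fix t assume "t \<in> Ls"
    then have "y t \<in> {1..k}"
      using valid unfolding valid_seq_def Ls_def by auto
    then have "m (y t) \<le> n"
      unfolding n by (intro member_le_sum) auto
    then show "q t \<le> n"
      unfolding q_def rem_cap_def by simp
  qed
  also have "\<dots> = real (card Ls) * g 0 + (\<Sum>c=1..n. \<Sum>t\<in>Ls. if c \<le> q t then g c - g (c - 1) else 0)"
    by (simp add: sum.distrib sum.swap[of _ Ls])
  also have "(\<Sum>c=1..n. \<Sum>t\<in>Ls. if c \<le> q t then g c - g (c - 1) else 0)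
      = (\<Sum>c=1..n. (g c - g (c - 1)) * real (high_marked m y w c n))"
  proof (rule sum.cong[OF refl])
    fix c
    have "(\<Sum>t\<in>Ls. if c \<le> q t then g c - g (c - 1) else 0) = (\<Sum>t\<in>{t\<in>Ls. c \<le> q t}. g c - g (c - 1))"
      by (rule sum.inter_filter[symmetric]) (simp add: Ls_def)
    also have "{t\<in>Ls. c \<le> q t} = {t\<in>{1..n}. w t \<and> c \<le> rem_cap m y t}"
      unfolding Ls_def q_def by auto
    finally show "(\<Sum>t\<in>Ls. if c \<le> q t then g c - g (c - 1) else 0) = (g c - g (c - 1)) * real (high_marked m y w c n)"
      unfolding high_marked_def by (simp add: mult.commute)
  qed
  finally show ?thesis
    unfolding Ls_def .
qed

lemma COST_le_of_high_marked_le: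
  fixes g T :: "nat \<Rightarrow> real"
  assumes "valid_seq k m n x" "valid_seq k m n y" "n = (\<Sum>r=1..k. m r)"
    and "\<forall>i\<in>{1..n}. T i = H \<or> T i = L" "T 1 = H" "H < L" "mono g"
    and le: "\<forall>c\<in>{1..n}. high_marked m y (\<lambda>i. T 1 < T i) c n \<le> high_marked m x (\<lambda>i. T 1 < T i) c n"
  shows "COST g m n T y \<le> COST g m n T x"
proof -
  have "(\<Sum>c=1..n. (g c - g (c - 1)) * real (high_marked m y (\<lambda>i. T 1 < T i) c n))
      \<le> (\<Sum>c=1..n. (g c - g (c - 1)) * real (high_marked m x (\<lambda>i. T 1 < T i) c n))"
  proof (rule sum_mono, rule mult_left_mono)
    fix c assume "c \<in> {1..n}"
    then show "real (high_marked m y (\<lambda>i. T 1 < T i) c n) \<le> real (high_marked m x (\<lambda>i. T 1 < T i) c n)"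
      using le by simp
    show "0 \<le> g c - g (c - 1)"
      using \<open>mono g\<close> by (simp add: monoD)
  qed
  then show ?thesis
    using COST_eq_high_marked[OF assms(1,3-6), of g] COST_eq_high_marked[OF assms(2,3-6), of g] \<open>H < L\<close>
    by (simp add: mult_left_mono)
qed

lemma exists_optimal_seq_threshold_alloc_first:
  fixes m :: "nat \<Rightarrow> nat"
  assumes "1 \<le> k" "0 < m 1" "\<forall>i j. 1 \<le> i \<and> i \<le> j \<and> j \<le> k \<longrightarrow> m i \<le> m j"
    and "n = (\<Sum>r=1..k. m r)" "\<not> w 1"
  obtains y where "valid_seq k m n (seq_Cons (threshold_alloc k m w) y)"
    "\<And>c. 1 \<le> c \<Longrightarrow> high_marked m (seq_Cons (threshold_alloc k m w) y) w c n \<le> min_high {1..k} m c w"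
proof -
  define b where "b = threshold_alloc k m w"
  let ?s = "m(b := m b - 1)" and ?w = "\<lambda>i. w (Suc i)"
  have "b \<in> {1..k}"
    unfolding b_def using threshold_alloc_greatest(1)[where m = m, OF assms(1,2)] .
  then have "0 < m b"
    using assms(2,3) by (metis atLeastAtMost_iff le_refl less_le_trans)
  then have n: "n = Suc (sum ?s {1..k})"
    using assms(4) sum_fun_upd_decr[where A = "{1..k}" and r = b and s = m] \<open>b \<in> {1..k}\<close> by simp
  obtain y where y: "valid_seq k ?s (n - 1) y"
    and opt: "\<forall>c. 1 \<le> c \<longrightarrow> high_marked ?s y ?w c (n - 1) \<le> min_high {1..k} ?s c ?w"
    using exists_optimal_seq[of "n - 1" ?s k ?w] n by auto
  have "high_marked m (seq_Cons b y) w c n \<le> min_high {1..k} m c w" if "1 \<le> c" for c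
  proof -
    have "high_marked m (seq_Cons b y) w c n = high_marked ?s y ?w c (n - 1)"
      using high_marked_seq_Cons[of m b y w c "n - 1"] n assms(5) by simp
    also have "\<dots> \<le> min_high {1..k} ?s c ?w"
      using opt that by blast
    also have "\<dots> \<le> min_high {1..k} m c w"
      unfolding b_def by (rule min_high_decr_threshold_alloc[where m = m and w = w, OF assms(1-3,5) that])
    finally show ?thesis .
  qed
  moreover have "valid_seq k m n (seq_Cons b y)"
    using valid_seq_Cons[OF y \<open>b \<in> {1..k}\<close> \<open>0 < m b\<close>] n by simp
  ultimately show ?thesis
    using that unfolding b_def by blast
qed

theorem lemma7:
  fixes k n :: nat and m :: "nat \<Rightarrow> nat" and T :: "nat \<Rightarrow> real"
    and g :: "nat \<Rightarrow> real" and H L :: real and x :: "nat \<Rightarrow> nat"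
  assumes "k \<ge> 1"
    and "0 < m 1"
    and "\<forall>i j. 1 \<le> i \<and> i \<le> j \<and> j \<le> k \<longrightarrow> m i \<le> m j"
    and "n = (\<Sum>r=1..k. m r)"
    and "0 \<le> H" and "H < L"
    and "\<forall>i\<in>{1..n}. T i = H \<or> T i = L"
    and "T 1 = H"
    and "mono g" and "\<forall>q. 0 \<le> g q"
    and "valid_seq k m n x"
    and "x 1 \<noteq> TA k m T"
  shows "\<exists>xs. valid_seq k m n xs \<and> xs 1 = TA k m T \<and> COST g m n T xs \<le> COST g m n T x"
proof -
  let ?w = "\<lambda>i. T 1 < T i"
  obtain y where y: "valid_seq k m n (seq_Cons (TA k m T) y)"
    and opt: "\<And>c. 1 \<le> c \<Longrightarrow> high_marked m (seq_Cons (TA k m T) y) ?w c n \<le> min_high {1..k} m c ?w"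
    using exists_optimal_seq_threshold_alloc_first[OF assms(1-4), of ?w]
    unfolding TA_eq_threshold_alloc by blast
  have "\<forall>c\<in>{1..n}. high_marked m (seq_Cons (TA k m T) y) ?w c n \<le> high_marked m x ?w c n"
    using opt min_high_le_high_marked[OF assms(11)] by (meson atLeastAtMost_iff le_trans)
  then have "COST g m n T (seq_Cons (TA k m T) y) \<le> COST g m n T x"
    by (rule COST_le_of_high_marked_le[OF assms(11) y assms(4,7,8,6,9)])
  then show ?thesis
    using y by (auto simp: seq_Cons_def)
qed

end
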